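(* Let $p,q\in[0,1]$ be rational numbers and $R\in\{\mathrm C,\mathrm S\}$. Then $\mathscr S^{p,q}_{\mathscr F_R}$ is exactly the set of all recursive temporal selection processes.
   Context: $\mathbb N_0=\{0,1,2,\dots\}$. $\mathbb S=\bigcup_{n\in\mathbb N_0}\{0,1\}^n$ is the set of finite binary sequences (situations), $\square$ the empty sequence, $|s|$ the length, $sx$ concatenation. For $r\in[0,1]$ and $f:\{0,1\}\to\mathbb R$, $E_r(f)=rf(1)+(1-r)f(0)$. A real process is a map $F:\mathbb S\to\mathbb R$, and $\Delta F(s)$ is the function $x\mapsto F(sx)-F(s)$. A test process is a non-negative real process with $F(\square)=1$. A map from $\mathbb S$ (or $\mathbb N_0$) to $\mathbb Q$ or $\{0,1\}$ is recursive if it is computable by a Turing machine. $\mathscr F_{\mathrm C}=\mathscr F_{\mathrm S}$ denotes the set of positive, rational-valued, recursive test processes. A selection process is a map $S:\mathbb S\to\{0,1\}$; it is temporal if $S(s)$ depends only on $|s|$ (written $S(n)$). For a real process $F$ and $r\in[0,1]$, $S^r_F$ is the temporal selection process with $S^r_F(n)=1$ if $E_r(\Delta F(s))>0$ for some $s\in\mathbb S$ with $|s|=n$, and $S^r_F(n)=0$ otherwise. For a set $\mathscr F$ of real processes, $\mathscr S^{p,q}_{\mathscr F}=\{S^r_F: F\in\mathscr F,\ r\in\{p,q\}\}$. *)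

theory Defs
  imports "HOL-Analysis.Analysis" "HOL-Library.Nat_Bijection"
begin

text \<open>This class coincides with the Turing-computable total functions.\<close>

inductive total_recursive :: "nat \<Rightarrow> (nat list \<Rightarrow> nat) \<Rightarrow> bool" where
  zero: "total_recursive n (\<lambda>_. 0)"
| succ: "total_recursive 1 (\<lambda>xs. Suc (hd xs))"
| proj: "i < n \<Longrightarrow> total_recursive n (\<lambda>xs. xs ! i)"
| compose: "total_recursive m f \<Longrightarrow> length gs = m \<Longrightarrow>
         (\<And>g. g \<in> set gs \<Longrightarrow> total_recursive n g) \<Longrightarrow>
         total_recursive n (\<lambda>xs. f (map (\<lambda>g. g xs) gs))"
| prim_rec: "total_recursive n f \<Longrightarrow> total_recursive (n + 2) g \<Longrightarrow>
         total_recursive (Suc n)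
           (\<lambda>xs. rec_nat (f (tl xs)) (\<lambda>y r. g (y # r # tl xs)) (hd xs))"
| mu: "total_recursive (Suc n) g \<Longrightarrow>
       (\<And>xs. length xs = n \<Longrightarrow> \<exists>y. g (y # xs) = 0) \<Longrightarrow>
       total_recursive n (\<lambda>xs. LEAST y. g (y # xs) = 0)"

definition computable :: "(nat \<Rightarrow> nat) \<Rightarrow> bool" where
  "computable h \<longleftrightarrow> (\<exists>g. total_recursive 1 g \<and> (\<forall>x. g [x] = h x))"

text \<open>Situations (finite binary sequences) are bool lists; True stands for 1,
  False for 0; s x (concatenation) is s @ [x]; the empty situation is [].\<close>

type_synonym situation = "bool list"

fun enc_sit :: "situation \<Rightarrow> nat" where
  "enc_sit [] = 0"
| "enc_sit (b # s) = 2 * enc_sit s + (if b then 2 else 1)"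

definition enc_rat :: "rat \<Rightarrow> nat" where
  "enc_rat q = prod_encode (int_encode (fst (quotient_of q)), int_encode (snd (quotient_of q)))"

definition recursive_rat_map :: "(situation \<Rightarrow> rat) \<Rightarrow> bool" where
  "recursive_rat_map G \<longleftrightarrow> (\<exists>h. computable h \<and> (\<forall>s. h (enc_sit s) = enc_rat (G s)))"

text \<open>Maps into {0,1} are modelled as bool-valued (True = 1).\<close>
definition recursive_bit_map :: "(situation \<Rightarrow> bool) \<Rightarrow> bool" where
  "recursive_bit_map S \<longleftrightarrow> (\<exists>h. computable h \<and> (\<forall>s. h (enc_sit s) = of_bool (S s)))"

definition E :: "real \<Rightarrow> (bool \<Rightarrow> real) \<Rightarrow> real" where
  "E r f = r * f True + (1 - r) * f False"

definition Delta :: "(situation \<Rightarrow> real) \<Rightarrow> situation \<Rightarrow> bool \<Rightarrow> real" where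
  "Delta F s = (\<lambda>x. F (s @ [x]) - F s)"

definition test_process :: "(situation \<Rightarrow> real) \<Rightarrow> bool" where
  "test_process F \<longleftrightarrow> (\<forall>s. 0 \<le> F s) \<and> F [] = 1"

text \<open>F_C = F_S: positive, rational-valued, recursive test processes.\<close>
definition F_C :: "(situation \<Rightarrow> real) set" where
  "F_C = {F. test_process F \<and> (\<forall>s. 0 < F s) \<and>
             (\<exists>G. recursive_rat_map G \<and> F = (\<lambda>s. real_of_rat (G s)))}"

definition temporal :: "(situation \<Rightarrow> bool) \<Rightarrow> bool" where
  "temporal S \<longleftrightarrow> (\<forall>s t. length s = length t \<longrightarrow> S s = S t)"

definition sel :: "(situation \<Rightarrow> real) \<Rightarrow> real \<Rightarrow> situation \<Rightarrow> bool" where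
  "sel F r = (\<lambda>t. \<exists>s. length s = length t \<and> E r (Delta F s) > 0)"

definition sel_set :: "rat \<Rightarrow> rat \<Rightarrow> (situation \<Rightarrow> real) set \<Rightarrow> (situation \<Rightarrow> bool) set" where
  "sel_set p q FF = {sel F (real_of_rat r) | F r. F \<in> FF \<and> r \<in> {p, q}}"

end

(* For F in F_C and a rational r = A/B in [0,1], the sign of E_r(Delta F(s)) is the sign of an
   integer polynomial in A, B and the numerators and denominators of F(s), F(s0), F(s1), all of
   which are recursive in the code of s; S^r_F(n) is then a bounded search over the finitely many
   codes of situations of length n.  Conversely, a recursive temporal S is S^r_F for every r when
   F(s) = 1 + #{i < |s|. S(i) = 1}: this process gains one unit in every selected situation
   whatever the outcome, so E_r(Delta F(s)) = S(s). *)

theory Submission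
  imports Defs
begin

(* Agreement is required only on argument lists of length n: the constructors of total_recursive
   fix junk values elsewhere (xs ! i on short lists, for instance). *)
definition recursive :: "nat \<Rightarrow> (nat list \<Rightarrow> nat) \<Rightarrow> bool" where
  "recursive n f \<longleftrightarrow> (\<exists>g. total_recursive n g \<and> (\<forall>xs. length xs = n \<longrightarrow> g xs = f xs))"

named_theorems recursive_intros

lemma recursive_cong:
  "recursive n f \<Longrightarrow> (\<And>xs. length xs = n \<Longrightarrow> f xs = g xs) \<Longrightarrow> recursive n g"
  unfolding recursive_def by metis

lemma recursive_comp:
  assumes f: "recursive m f"
    and es: "\<And>i. i < m \<Longrightarrow> recursive n (\<lambda>xs. es xs ! i)"
    and len: "\<And>xs. length xs = n \<Longrightarrow> length (es xs) = m"
  shows "recursive n (\<lambda>xs. f (es xs))"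
proof -
  obtain f' where f': "total_recursive m f'" "\<And>xs. length xs = m \<Longrightarrow> f' xs = f xs"
    using f unfolding recursive_def by blast
  have "\<forall>i<m. \<exists>g. total_recursive n g \<and> (\<forall>xs. length xs = n \<longrightarrow> g xs = es xs ! i)"
    using es unfolding recursive_def by blast
  then obtain g where g: "\<And>i. i < m \<Longrightarrow> total_recursive n (g i)"
    "\<And>i xs. i < m \<Longrightarrow> length xs = n \<Longrightarrow> g i xs = es xs ! i"
    by metis
  have "total_recursive n (\<lambda>xs. f' (map (\<lambda>g. g xs) (map g [0..<m])))"
    by (rule total_recursive.compose[OF f'(1)]) (auto intro: g(1))
  moreover have "map (\<lambda>g. g xs) (map g [0..<m]) = es xs" if "length xs = n" for xs
    using that len by (auto intro: nth_equalityI simp: g(2))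
  ultimately show ?thesis
    unfolding recursive_def using f'(2) len
    by (intro exI[of _ "\<lambda>xs. f' (map (\<lambda>g. g xs) (map g [0..<m]))"]) auto
qed

lemma recursive_nth [recursive_intros]: "i < n \<Longrightarrow> recursive n (\<lambda>xs. xs ! i)"
  unfolding recursive_def using total_recursive.proj by blast

lemma recursive_hd [recursive_intros]: "recursive (Suc n) hd"
  by (rule recursive_cong[OF recursive_nth[of 0]]) (auto simp: length_Suc_conv)

lemma recursive_tl [recursive_intros]:
  assumes "recursive n e"
  shows "recursive (Suc n) (\<lambda>xs. e (tl xs))"
proof (rule recursive_comp[OF assms])
  fix i assume "i < n"
  then show "recursive (Suc n) (\<lambda>xs. tl xs ! i)"
    by (intro recursive_cong[OF recursive_nth[of "Suc i"]]) (auto simp: nth_tl)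
qed simp

lemma recursive_Cons_arg:
  assumes "recursive (Suc n) f" "recursive n e"
  shows "recursive n (\<lambda>xs. f (e xs # xs))"
proof (rule recursive_comp[OF assms(1)])
  fix i assume "i < Suc n"
  then show "recursive n (\<lambda>xs. (e xs # xs) ! i)"
    by (cases i) (auto intro: assms(2) recursive_nth)
qed simp

lemma recursive_Suc [recursive_intros]:
  assumes e: "recursive n e"
  shows "recursive n (\<lambda>xs. Suc (e xs))"
proof -
  have "recursive 1 (\<lambda>xs. Suc (hd xs))"
    unfolding recursive_def using total_recursive.succ by blast
  then have "recursive n (\<lambda>xs. Suc (hd [e xs]))"
    by (rule recursive_comp) (use e in auto)
  then show ?thesis by simp
qed

lemma recursive_const [recursive_intros]: "recursive n (\<lambda>_. k)"
proof (induction k)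
  case 0
  then show ?case unfolding recursive_def using total_recursive.zero by blast
qed (rule recursive_Suc)

lemma recursive_rec_nat [recursive_intros]:
  assumes e: "recursive n e" and f: "recursive n f"
    and g: "recursive (Suc (Suc n)) (\<lambda>ys. g (hd ys) (hd (tl ys)) (tl (tl ys)))"
  shows "recursive n (\<lambda>xs. rec_nat (f xs) (\<lambda>y r. g y r xs) (e xs))"
proof -
  obtain f' where f': "total_recursive n f'" "\<And>xs. length xs = n \<Longrightarrow> f' xs = f xs"
    using f unfolding recursive_def by blast
  obtain g' where g': "total_recursive (n + 2) g'"
    "\<And>ys. length ys = Suc (Suc n) \<Longrightarrow> g' ys = g (hd ys) (hd (tl ys)) (tl (tl ys))"
    using g unfolding recursive_def by auto
  have "recursive (Suc n) (\<lambda>xs. rec_nat (f' (tl xs)) (\<lambda>y r. g' (y # r # tl xs)) (hd xs))"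
    unfolding recursive_def using total_recursive.prim_rec[OF f'(1) g'(1)] by blast
  from recursive_Cons_arg[OF this e]
  show ?thesis
    by (rule recursive_cong) (simp add: f'(2) g'(2))
qed

lemma recursive_add [recursive_intros]:
  assumes "recursive n e1" "recursive n e2"
  shows "recursive n (\<lambda>xs. e1 xs + e2 xs)"
proof -
  have "recursive n (\<lambda>xs. rec_nat (e2 xs) (\<lambda>_ r. Suc r) (e1 xs))"
    by (intro recursive_intros assms)
  moreover have "rec_nat b (\<lambda>_ r. Suc r) a = a + b" for a b :: nat
    by (induction a) simp_all
  ultimately show ?thesis by simp
qed

lemma recursive_mult [recursive_intros]:
  assumes "recursive n e1" "recursive n e2"
  shows "recursive n (\<lambda>xs. e1 xs * e2 xs)"
proof -
  have "recursive n (\<lambda>xs. rec_nat 0 (\<lambda>_ r. r + e2 xs) (e1 xs))"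
    by (intro recursive_intros assms)
  moreover have "rec_nat 0 (\<lambda>_ r. r + b) a = a * b" for a b :: nat
    by (induction a) simp_all
  ultimately show ?thesis by simp
qed

lemma recursive_diff [recursive_intros]:
  assumes "recursive n e1" "recursive n e2"
  shows "recursive n (\<lambda>xs. e1 xs - e2 xs)"
proof -
  have "recursive m (\<lambda>xs. rec_nat 0 (\<lambda>y _. y) (e xs))" if "recursive m e" for m e
    by (intro recursive_intros that)
  moreover have "rec_nat 0 (\<lambda>y _. y) a = a - 1" for a :: nat
    by (cases a) simp_all
  ultimately have pred: "recursive m (\<lambda>xs. e xs - 1)" if "recursive m e" for m e
    using that by simp
  have "recursive n (\<lambda>xs. rec_nat (e1 xs) (\<lambda>_ r. r - 1) (e2 xs))"
    by (intro recursive_intros assms pred[OF recursive_tl])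
  moreover have "rec_nat b (\<lambda>_ r. r - 1) a = b - a" for a b :: nat
    by (induction a) simp_all
  ultimately show ?thesis by simp
qed

lemma recursive_power [recursive_intros]:
  assumes "recursive n e1" "recursive n e2"
  shows "recursive n (\<lambda>xs. e1 xs ^ e2 xs)"
proof -
  have "recursive n (\<lambda>xs. rec_nat 1 (\<lambda>_ r. e1 xs * r) (e2 xs))"
    by (intro recursive_intros assms)
  moreover have "rec_nat 1 (\<lambda>_ r. b * r) a = b ^ a" for a b :: nat
    by (induction a) simp_all
  ultimately show ?thesis by simp
qed

lemma recursive_triangle [recursive_intros]:
  assumes "recursive n e"
  shows "recursive n (\<lambda>xs. triangle (e xs))"
proof -
  from assms have "recursive n (\<lambda>xs. rec_nat 0 (\<lambda>y r. r + Suc y) (e xs))"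
    by (intro recursive_intros)
  moreover have "rec_nat 0 (\<lambda>y r. r + Suc y) a = triangle a" for a
    by (induction a) simp_all
  ultimately show ?thesis by simp
qed

lemma recursive_le [recursive_intros]:
  "recursive n e1 \<Longrightarrow> recursive n e2 \<Longrightarrow> recursive n (\<lambda>xs. of_bool (e1 xs \<le> e2 xs))"
  using recursive_diff[OF recursive_const[of n 1] recursive_diff[of n e1 e2]]
  by (rule recursive_cong) auto

lemma recursive_less [recursive_intros]:
  "recursive n e1 \<Longrightarrow> recursive n e2 \<Longrightarrow> recursive n (\<lambda>xs. of_bool (e1 xs < e2 xs))"
  using recursive_le[of n "\<lambda>xs. Suc (e1 xs)" e2] recursive_Suc by (simp add: Suc_le_eq)

lemma recursive_conj [recursive_intros]:
  "recursive n (\<lambda>xs. of_bool (P xs)) \<Longrightarrow> recursive n (\<lambda>xs. of_bool (Q xs)) \<Longrightarrow>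
   recursive n (\<lambda>xs. of_bool (P xs \<and> Q xs))"
  using recursive_mult[of n "\<lambda>xs. of_bool (P xs)" "\<lambda>xs. of_bool (Q xs)"] by (simp add: of_bool_conj)

lemma recursive_eq [recursive_intros]:
  "recursive n e1 \<Longrightarrow> recursive n e2 \<Longrightarrow> recursive n (\<lambda>xs. of_bool (e1 xs = e2 xs))"
  using recursive_conj[OF recursive_le[of n e1 e2] recursive_le[of n e2 e1]] by (simp add: eq_iff)

lemma recursive_sum [recursive_intros]:
  assumes g: "recursive (Suc n) (\<lambda>ys. g (hd ys) (tl ys))" and e: "recursive n e"
  shows "recursive n (\<lambda>xs. \<Sum>y<e xs. g y xs)"
proof -
  have "recursive (Suc (Suc n)) (\<lambda>ys. g (hd ys) (tl (tl ys)))"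
  proof (rule recursive_comp[OF g, of _ "\<lambda>ys. hd ys # tl (tl ys)", simplified])
    fix i assume "i < Suc n"
    then show "recursive (Suc (Suc n)) (\<lambda>ys. (hd ys # tl (tl ys)) ! i)"
      by (cases i) (auto intro!: recursive_intros)
  qed simp
  then have "recursive n (\<lambda>xs. rec_nat 0 (\<lambda>y r. r + g y xs) (e xs))"
    by (intro recursive_intros e)
  moreover have "rec_nat 0 (\<lambda>y r. r + g y xs) a = (\<Sum>y<a. g y xs)" for a xs
    by (induction a) simp_all
  ultimately show ?thesis by simp
qed

lemma recursive_bex [recursive_intros]:
  assumes "recursive (Suc n) (\<lambda>ys. of_bool (P (hd ys) (tl ys)))" "recursive n e"
  shows "recursive n (\<lambda>xs. of_bool (\<exists>y<e xs. P y xs))"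
proof -
  from assms have "recursive n (\<lambda>xs. of_bool (0 < (\<Sum>y<e xs. of_bool (P y xs) :: nat)))"
    by (intro recursive_intros)
  moreover have "(0 < (\<Sum>y<a. of_bool (P y xs) :: nat)) = (\<exists>y<a. P y xs)" for a xs
    by (induction a) (auto simp: less_Suc_eq)
  ultimately show ?thesis by simp
qed

lemma recursive_Least:
  assumes P: "recursive (Suc n) (\<lambda>ys. of_bool (P (hd ys) (tl ys)))"
    and ex: "\<And>xs. length xs = n \<Longrightarrow> \<exists>y. P y xs"
  shows "recursive n (\<lambda>xs. LEAST y. P y xs)"
proof -
  have "recursive (Suc n) (\<lambda>ys. 1 - of_bool (P (hd ys) (tl ys)))"
    by (intro recursive_intros P)
  then obtain g where g: "total_recursive (Suc n) g"
    "\<And>ys. length ys = Suc n \<Longrightarrow> g ys = 1 - of_bool (P (hd ys) (tl ys))"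
    unfolding recursive_def by auto
  have zero_iff: "(1 - of_bool Q = (0::nat)) \<longleftrightarrow> Q" for Q
    by simp
  have "total_recursive n (\<lambda>xs. LEAST y. g (y # xs) = 0)"
    using total_recursive.mu[OF g(1)] ex by (simp add: g(2) zero_iff)
  moreover have "(LEAST y. g (y # xs) = 0) = (LEAST y. P y xs)" if "length xs = n" for xs
    using that by (simp add: g(2) zero_iff)
  ultimately show ?thesis
    unfolding recursive_def by auto
qed

lemma computable_iff_recursive: "computable h \<longleftrightarrow> recursive (Suc 0) (\<lambda>xs. h (hd xs))"
  unfolding computable_def recursive_def by (auto simp: length_Suc_conv)

(* Not among recursive_intros: with e = id its conclusion matches every function. *)
lemma recursive_computable:
  assumes "computable h" "recursive n e"
  shows "recursive n (\<lambda>xs. h (e xs))"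
  using recursive_comp[of "Suc 0" "\<lambda>xs. h (hd xs)" n "\<lambda>xs. [e xs]"] assms
  by (simp add: computable_iff_recursive)

lemma prod_encode_triangle: "prod_encode (m, n) = triangle (m + n) + m"
  by (simp add: prod_encode_def)

lemma recursive_prod_encode [recursive_intros]:
  assumes "recursive n e1" "recursive n e2"
  shows "recursive n (\<lambda>xs. prod_encode (e1 xs, e2 xs))"
  unfolding prod_encode_triangle by (intro recursive_intros assms)

definition prod_decode_diag :: "nat \<Rightarrow> nat" where
  "prod_decode_diag c = (LEAST k. c < triangle (Suc k))"

lemma prod_decode_diag_prod_encode: "prod_decode_diag (prod_encode (m, n)) = m + n"
  unfolding prod_decode_diag_def prod_encode_triangle
proof (rule Least_equality)
  fix k assume less: "triangle (m + n) + m < triangle (Suc k)"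
  show "m + n \<le> k"
  proof (rule ccontr)
    assume "\<not> m + n \<le> k"
    then have "triangle (Suc k) \<le> triangle (m + n)"
      unfolding triangle_def by (intro div_le_mono mult_le_mono) auto
    with less show False by simp
  qed
qed simp

lemma fst_prod_decode: "fst (prod_decode c) = c - triangle (prod_decode_diag c)"
  and snd_prod_decode: "snd (prod_decode c) = prod_decode_diag c - fst (prod_decode c)"
proof -
  obtain m n where mn: "prod_decode c = (m, n)" by fastforce
  then have c: "c = prod_encode (m, n)" by (metis prod_decode_inverse)
  then have "prod_decode_diag c = m + n" by (simp add: prod_decode_diag_prod_encode)
  with c mn show "fst (prod_decode c) = c - triangle (prod_decode_diag c)"
    and "snd (prod_decode c) = prod_decode_diag c - fst (prod_decode c)"
    by (simp_all add: prod_encode_triangle)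
qed

lemma recursive_prod_decode_diag [recursive_intros]:
  assumes "recursive n e"
  shows "recursive n (\<lambda>xs. prod_decode_diag (e xs))"
proof -
  have "recursive (Suc 0) (\<lambda>xs. LEAST k. hd xs < triangle (Suc k))"
  proof (rule recursive_Least)
    fix xs :: "nat list"
    have "hd xs < triangle (Suc (hd xs))" by simp
    then show "\<exists>k. hd xs < triangle (Suc k)" ..
  qed (intro recursive_intros)
  then have "computable prod_decode_diag"
    unfolding computable_iff_recursive prod_decode_diag_def .
  then show ?thesis by (rule recursive_computable) (rule assms)
qed

lemma recursive_fst_prod_decode [recursive_intros]:
  assumes "recursive n e"
  shows "recursive n (\<lambda>xs. fst (prod_decode (e xs)))"
  unfolding fst_prod_decode by (intro recursive_intros assms)

lemma recursive_snd_prod_decode [recursive_intros]: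
  assumes "recursive n e"
  shows "recursive n (\<lambda>xs. snd (prod_decode (e xs)))"
  unfolding snd_prod_decode fst_prod_decode by (intro recursive_intros assms)

(* enc_sit is bijective base-2 numeration: the situations of length n have exactly the codes
   2^n - 1, ..., 2^(n+1) - 2. *)
definition code_length :: "nat \<Rightarrow> nat" where
  "code_length c = (LEAST k. c + 2 \<le> 2 ^ Suc k)"

lemma recursive_code_length [recursive_intros]:
  assumes "recursive n e"
  shows "recursive n (\<lambda>xs. code_length (e xs))"
proof -
  have "recursive (Suc 0) (\<lambda>xs. LEAST k. hd xs + 2 \<le> 2 ^ Suc k)"
  proof (rule recursive_Least)
    fix xs :: "nat list"
    have "hd xs + 2 \<le> 2 ^ Suc (hd xs)"
      using less_exp[of "hd xs"] by (simp only: power_Suc)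
    then show "\<exists>k. hd xs + 2 \<le> 2 ^ Suc k" ..
  qed (intro recursive_intros)
  then have "computable code_length"
    unfolding computable_iff_recursive code_length_def .
  then show ?thesis by (rule recursive_computable) (rule assms)
qed

lemma enc_sit_bounds: "2 ^ length s \<le> enc_sit s + 1" "enc_sit s + 2 \<le> 2 ^ Suc (length s)"
  by (induction s) auto

lemma code_length_enc_sit: "code_length (enc_sit s) = length s"
  unfolding code_length_def
proof (rule Least_equality)
  fix k assume k: "enc_sit s + 2 \<le> 2 ^ Suc k"
  show "length s \<le> k"
  proof (rule ccontr)
    assume "\<not> length s \<le> k"
    then have "(2::nat) ^ Suc k \<le> 2 ^ length s" by (intro power_increasing) auto
    with k enc_sit_bounds(1)[of s] show False by simp
  qed
qed (rule enc_sit_bounds(2))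

lemma enc_sit_snoc: "enc_sit (s @ [x]) = enc_sit s + (if x then 2 else 1) * 2 ^ length s"
  by (induction s) auto

lemma enc_sit_replicate_False: "enc_sit (replicate n False) = 2 ^ n - 1"
proof (induction n)
  case (Suc n)
  have "(2::nat) ^ n \<noteq> 0" by simp
  with Suc show ?case by (cases "(2::nat) ^ n") simp_all
qed simp

lemma surj_enc_sit: "surj enc_sit"
proof -
  have "\<exists>s. enc_sit s = c" for c
  proof (induction c rule: less_induct)
    case (less c)
    show ?case
    proof (cases "c = 0")
      case False
      then obtain s where s: "enc_sit s = (c - 1) div 2"
        using less by fastforce
      have "enc_sit (even c # s) = c"
        using False by (simp add: s) presburger
      then show ?thesis ..
    qed (metis enc_sit.simps(1))
  qed
  then show ?thesis by (metis surj_def)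
qed

lemma ex_length_eq_iff_bounded_code:
  "(\<exists>s. length s = n \<and> Q (enc_sit s)) \<longleftrightarrow> (\<exists>c<2 ^ Suc n. code_length c = n \<and> Q c)"
proof
  assume "\<exists>s. length s = n \<and> Q (enc_sit s)"
  then obtain s where "length s = n" "Q (enc_sit s)" by blast
  with enc_sit_bounds(2)[of s] show "\<exists>c<2 ^ Suc n. code_length c = n \<and> Q c"
    by (intro exI[of _ "enc_sit s"]) (auto simp: code_length_enc_sit)
next
  assume "\<exists>c<2 ^ Suc n. code_length c = n \<and> Q c"
  then obtain c where "code_length c = n" "Q c" by blast
  moreover obtain s where "enc_sit s = c" using surj_enc_sit by (metis surjD)
  ultimately show "\<exists>s. length s = n \<and> Q (enc_sit s)"
    by (auto simp: code_length_enc_sit)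
qed

lemma rat_unit_interval_fraction:
  assumes "0 \<le> r" "r \<le> 1"
  obtains A B :: nat where "A \<le> B" "0 < B" "real_of_rat r = A / B"
proof -
  obtain a b where q: "quotient_of r = (a, b)" by fastforce
  have b: "0 < b" by (rule quotient_of_denom_pos[OF q])
  have r: "r = of_int a / of_int b" by (rule quotient_of_div[OF q])
  have "0 \<le> a" "a \<le> b"
    using assms b unfolding r by (simp_all add: zero_le_divide_iff divide_le_eq_1)
  with b r show ?thesis
    by (intro that[of "nat a" "nat b"]) (simp_all add: of_rat_divide)
qed

lemma prod_decode_enc_rat:
  assumes "0 < q"
  shows "0 < snd (prod_decode (enc_rat q))"
    and "real_of_rat q = fst (prod_decode (enc_rat q)) / snd (prod_decode (enc_rat q))"
proof -
  obtain a b where q: "quotient_of q = (a, b)" by fastforce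
  have b: "0 < b" by (rule quotient_of_denom_pos[OF q])
  have qab: "q = of_int a / of_int b" by (rule quotient_of_div[OF q])
  with assms b have a: "0 < a" by (simp add: zero_less_divide_iff)
  have "prod_decode (enc_rat q) = (2 * nat a, 2 * nat b)"
    using a b by (simp add: enc_rat_def q int_encode_def sum_encode_def)
  with a b qab show "0 < snd (prod_decode (enc_rat q))"
    and "real_of_rat q = fst (prod_decode (enc_rat q)) / snd (prod_decode (enc_rat q))"
    by (simp_all add: of_rat_divide)
qed

lemma enc_rat_of_nat: "enc_rat (of_nat m) = prod_encode (2 * m, 2)"
  by (simp add: enc_rat_def int_encode_def sum_encode_def)

lemma E_fraction_pos_iff:
  fixes A B N N0 N1 D D0 D1 :: nat
  assumes "A \<le> B" "0 < B" "0 < D" "0 < D0" "0 < D1"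
  shows "0 < E (A / B) (\<lambda>x. (if x then N1 / D1 else N0 / D0) - N / D) \<longleftrightarrow>
    B * N * D0 * D1 < A * N1 * D0 * D + (B - A) * N0 * D1 * D"
proof -
  define L where "L = B * N * D0 * D1"
  define R where "R = A * N1 * D0 * D + (B - A) * N0 * D1 * D"
  have "E (A / B) (\<lambda>x. (if x then N1 / D1 else N0 / D0) - N / D) =
      (real R - real L) / real (B * D * D0 * D1)"
    using assms unfolding L_def R_def by (simp add: E_def of_nat_diff field_simps)
  moreover have "0 < real (B * D * D0 * D1)" using assms by simp
  ultimately have "0 < E (A / B) (\<lambda>x. (if x then N1 / D1 else N0 / D0) - N / D) \<longleftrightarrow> L < R"
    by (simp add: zero_less_divide_iff)
  then show ?thesis unfolding L_def R_def .
qed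

lemma temporal_sel: "temporal (sel F r)"
  unfolding temporal_def sel_def by simp

lemma recursive_bit_map_sel:
  assumes "F \<in> F_C" "0 \<le> r" "r \<le> 1"
  shows "recursive_bit_map (sel F (real_of_rat r))"
proof -
  obtain G where G: "recursive_rat_map G" and F: "F = (\<lambda>s. real_of_rat (G s))"
    and pos: "\<And>s. 0 < G s"
    using assms(1) unfolding F_C_def by auto
  obtain h where h: "computable h" "\<And>s. h (enc_sit s) = enc_rat (G s)"
    using G unfolding recursive_rat_map_def by blast
  obtain A B :: nat where AB: "A \<le> B" "0 < B" "real_of_rat r = A / B"
    using rat_unit_interval_fraction assms(2,3) .
  define num where "num c = fst (prod_decode (h c))" for c
  define den where "den c = snd (prod_decode (h c))" for c
  have F_frac: "F s = num (enc_sit s) / den (enc_sit s)" and den_pos: "0 < den (enc_sit s)" for s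
    using prod_decode_enc_rat[OF pos[of s]] unfolding F num_def den_def h(2) by simp_all
  \<comment> \<open>if c codes s, then c0 and c1 code s @ [False] and s @ [True]\<close>
  define gain_pos where "gain_pos c \<longleftrightarrow>
    (let c0 = c + 2 ^ code_length c; c1 = c + 2 * 2 ^ code_length c in
      B * num c * den c0 * den c1 < A * num c1 * den c0 * den c + (B - A) * num c0 * den c1 * den c)"
    for c
  have gain_pos_iff: "gain_pos (enc_sit s) \<longleftrightarrow> 0 < E (real_of_rat r) (Delta F s)" for s
  proof -
    have "Delta F s = (\<lambda>x. (if x then F (s @ [True]) else F (s @ [False])) - F s)"
      unfolding Delta_def by auto
    then show ?thesis
      unfolding gain_pos_def Let_def AB(3) F_frac
      using E_fraction_pos_iff[OF AB(1,2) den_pos den_pos den_pos]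
      by (simp add: enc_sit_snoc code_length_enc_sit)
  qed
  define H :: "nat \<Rightarrow> nat"
    where "H z = of_bool (\<exists>c<2 ^ Suc (code_length z). code_length c = code_length z \<and> gain_pos c)"
    for z
  have "computable H"
    unfolding computable_iff_recursive H_def gain_pos_def Let_def num_def den_def
    by (intro recursive_intros recursive_computable[OF h(1)])
  moreover have "H (enc_sit t) = of_bool (sel F (real_of_rat r) t)" for t
    unfolding H_def sel_def code_length_enc_sit ex_length_eq_iff_bounded_code[symmetric] gain_pos_iff ..
  ultimately show ?thesis
    unfolding recursive_bit_map_def by blast
qed

definition selection_count :: "(situation \<Rightarrow> bool) \<Rightarrow> situation \<Rightarrow> rat" where
  "selection_count S s = of_nat (Suc (\<Sum>i<length s. of_bool (S (replicate i False))))"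

lemma Delta_selection_count:
  assumes "temporal S"
  shows "Delta (\<lambda>s. real_of_rat (selection_count S s)) s = (\<lambda>_. of_bool (S s))"
proof -
  have "S (replicate (length s) False) = S s"
    using assms unfolding temporal_def by (metis length_replicate)
  then show ?thesis
    unfolding Delta_def selection_count_def by (simp add: of_rat_add)
qed

lemma sel_selection_count:
  assumes "temporal S"
  shows "sel (\<lambda>s. real_of_rat (selection_count S s)) r = S"
proof
  fix t
  have "(\<exists>s. length s = length t \<and> S s) \<longleftrightarrow> S t"
    using assms unfolding temporal_def by blast
  then show "sel (\<lambda>s. real_of_rat (selection_count S s)) r t = S t"
    unfolding sel_def Delta_selection_count[OF assms] by (simp add: E_def algebra_simps)
qed

lemma selection_count_in_F_C:
  assumes "recursive_bit_map S"
  shows "(\<lambda>s. real_of_rat (selection_count S s)) \<in> F_C"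
proof -
  obtain h where h: "computable h" "\<And>s. h (enc_sit s) = of_bool (S s)"
    using assms unfolding recursive_bit_map_def by blast
  define H where "H c = prod_encode (2 * Suc (\<Sum>i<code_length c. h (2 ^ i - 1)), 2)" for c
  have "computable H"
    unfolding computable_iff_recursive H_def
    by (intro recursive_intros recursive_computable[OF h(1)])
  moreover have "H (enc_sit s) = enc_rat (selection_count S s)" for s
  proof -
    have "h (2 ^ i - 1) = of_bool (S (replicate i False))" for i
      using h(2)[of "replicate i False"] by (simp add: enc_sit_replicate_False)
    then show ?thesis
      unfolding H_def selection_count_def enc_rat_of_nat code_length_enc_sit by simp
  qed
  ultimately have "recursive_rat_map (selection_count S)"
    unfolding recursive_rat_map_def by blast
  then show ?thesis
    unfolding F_C_def test_process_def by (auto simp: selection_count_def)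
qed

theorem proposition27:
  fixes p q :: rat
  assumes "0 \<le> p" "p \<le> 1" "0 \<le> q" "q \<le> 1"
  shows "sel_set p q F_C = {S. temporal S \<and> recursive_bit_map S}"
proof
  show "sel_set p q F_C \<subseteq> {S. temporal S \<and> recursive_bit_map S}"
    using assms by (auto simp: sel_set_def temporal_sel intro!: recursive_bit_map_sel)
  show "{S. temporal S \<and> recursive_bit_map S} \<subseteq> sel_set p q F_C"
  proof
    fix S assume "S \<in> {S. temporal S \<and> recursive_bit_map S}"
    then have "S = sel (\<lambda>s. real_of_rat (selection_count S s)) (real_of_rat p)"
      and "(\<lambda>s. real_of_rat (selection_count S s)) \<in> F_C"
      by (simp_all add: sel_selection_count selection_count_in_F_C)
    then show "S \<in> sel_set p q F_C"
      unfolding sel_set_def by blast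
  qed
qed

end
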